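(* Let $d\ge1$, let $G$ be a graph on $[n]$, and let $A\subset[n]$ be a vertex subset that induces a clique in the $d$-rigidity closure $C_d(G)$. Then $C_{d,A}(G)\subseteq C_d(G)$.
   Context: Fix a generic $\mathbf p:[n]\to\mathbb R^d$ (coordinates algebraically independent over $\mathbb Q$). For $x\ne y\in[n]$ let $\mathbf r_{xy}\in\mathbb R^{dn}$ have $(\mathbf p(x)-\mathbf p(y))^T$ in the $d$ coordinates of $x$, $(\mathbf p(y)-\mathbf p(x))^T$ in those of $y$, and $0$ elsewhere. $C_d(G)$ is the graph on $[n]$ with edge set $\{f\in\binom{[n]}2:\mathbf r_f\in\operatorname{span}_{\mathbb R}(\mathbf r_e:e\in G)\}$. For $A\subseteq[n]$, let $V_A=\operatorname{span}_{\mathbb R}(\mathbf r_e: e\in\binom A2)$, let $W_A$ be its orthogonal complement in $\mathbb R^{dn}$, and $P_{W_A}$ the orthogonal projection onto $W_A$. Then $C_{d,A}(G)=\{f\in\binom{[n]}2\setminus\binom A2: P_{W_A}\mathbf r_f\in\operatorname{span}_{\mathbb R}(P_{W_A}\mathbf r_e: e\in G)\}$. *)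

theory Defs
  imports "HOL-Analysis.Analysis"
begin

text \<open>Vertex set [n] is modelled by a finite type 'v (n = CARD('v)); R^d by real^'d
  (d = CARD('d) >= 1 automatically); R^{dn} by real^('v \<times> 'd).\<close>

text \<open>Algebraic independence over Q of a finite family of reals: no nonzero polynomial
  with rational coefficients vanishes at it (polynomials written as finite sums of monomials,
  a monomial being an exponent vector 'i => nat).\<close>
definition alg_indep_Q :: "('i::finite \<Rightarrow> real) \<Rightarrow> bool" where
  "alg_indep_Q x \<longleftrightarrow>
     (\<forall>(M :: ('i \<Rightarrow> nat) set) (c :: ('i \<Rightarrow> nat) \<Rightarrow> rat).
        finite M \<longrightarrow> (\<exists>m\<in>M. c m \<noteq> 0) \<longrightarrow>
        (\<Sum>m\<in>M. of_rat (c m) * (\<Prod>i\<in>UNIV. x i ^ m i)) \<noteq> 0)"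

definition generic :: "('v::finite \<Rightarrow> real^'d) \<Rightarrow> bool" where
  "generic p \<longleftrightarrow> alg_indep_Q (\<lambda>(v, k). p v $ k)"

definition rvec :: "('v::finite \<Rightarrow> real^'d) \<Rightarrow> 'v \<Rightarrow> 'v \<Rightarrow> real^('v \<times> 'd)" where
  "rvec p x y = (\<chi> vk. if fst vk = x then p x $ snd vk - p y $ snd vk
                          else if fst vk = y then p y $ snd vk - p x $ snd vk else 0)"

text \<open>Edges: 2-element vertex sets. A graph is a set of edges.\<close>
definition edges_of :: "'v set \<Rightarrow> 'v set set" where
  "edges_of A = {e. e \<subseteq> A \<and> card e = 2}"

definition rvecs :: "('v::finite \<Rightarrow> real^'d) \<Rightarrow> 'v set set \<Rightarrow> (real^('v \<times> 'd)) set" where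
  "rvecs p E = {rvec p x y | x y. x \<noteq> y \<and> {x, y} \<in> E}"

definition rigidity_closure :: "('v::finite \<Rightarrow> real^'d) \<Rightarrow> 'v set set \<Rightarrow> 'v set set" where
  "rigidity_closure p G = {{x, y} | x y. x \<noteq> y \<and> rvec p x y \<in> span (rvecs p G)}"

definition V_sub :: "('v::finite \<Rightarrow> real^'d) \<Rightarrow> 'v set \<Rightarrow> (real^('v \<times> 'd)) set" where
  "V_sub p A = span (rvecs p (edges_of A))"

definition W_sub :: "('v::finite \<Rightarrow> real^'d) \<Rightarrow> 'v set \<Rightarrow> (real^('v \<times> 'd)) set" where
  "W_sub p A = orthogonal_comp (V_sub p A)"

text \<open>Orthogonal projection onto a (finite-dimensional, hence closed) subspace S.\<close>
definition orth_proj :: "('a::euclidean_space) set \<Rightarrow> 'a \<Rightarrow> 'a" where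
  "orth_proj S v = (THE w. w \<in> S \<and> v - w \<in> orthogonal_comp S)"

definition rel_rigidity_closure ::
  "('v::finite \<Rightarrow> real^'d) \<Rightarrow> 'v set \<Rightarrow> 'v set set \<Rightarrow> 'v set set" where
  "rel_rigidity_closure p A G =
     {{x, y} | x y. x \<noteq> y \<and> {x, y} \<notin> edges_of A \<and>
        orth_proj (W_sub p A) (rvec p x y)
          \<in> span (orth_proj (W_sub p A) ` rvecs p G)}"

end

theory Submission
  imports Defs
begin

text \<open>Since \<open>A\<close> is a clique of \<open>C\<^sub>d(G)\<close>, the space \<open>V\<^sub>A\<close> lies in the span of the rigidity
  vectors of \<open>G\<close>. Each vector \<open>v\<close> differs from its projection \<open>P v\<close> onto \<open>W\<^sub>A = V\<^sub>A\<^sup>\<bottom>\<close> by an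
  element of \<open>V\<^sub>A\<close>; so the projections \<open>P r\<^sub>e\<close> (\<open>e \<in> G\<close>) lie in that span, and if \<open>P r\<^sub>f\<close> is
  a combination of them, then \<open>r\<^sub>f = P r\<^sub>f + (r\<^sub>f - P r\<^sub>f)\<close> lies in it as well.\<close>

lemma orth_proj_eqI:
  assumes "subspace S" "w \<in> S" "v - w \<in> orthogonal_comp S"
  shows "orth_proj S v = w"
  unfolding orth_proj_def
proof (rule the_equality)
  show "w \<in> S \<and> v - w \<in> orthogonal_comp S"
    using assms(2,3) by (rule conjI)
next
  fix w' assume w': "w' \<in> S \<and> v - w' \<in> orthogonal_comp S"
  have "w' - w \<in> S"
    using subspace_diff[OF assms(1)] w' assms(2) by blast
  moreover have "(v - w) - (v - w') \<in> orthogonal_comp S"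
    using subspace_diff[OF subspace_orthogonal_comp] assms(3) w' by blast
  then have "w' - w \<in> orthogonal_comp S"
    by (simp add: algebra_simps)
  ultimately have "w' - w = 0"
    using orthogonal_Int_0[OF assms(1)] by blast
  then show "w' = w"
    by simp
qed

lemma diff_orth_proj_orthogonal_comp:
  fixes V :: "'a::euclidean_space set"
  assumes "subspace V"
  shows "v - orth_proj (orthogonal_comp V) v \<in> V"
proof -
  obtain a b where "v = a + b" "a \<in> V" "b \<in> orthogonal_comp V"
    using subspace_sum_orthogonal_comp[OF assms] set_plus_elim by blast
  moreover have "orth_proj (orthogonal_comp V) v = b"
    using calculation orthogonal_comp_subset
    by (intro orth_proj_eqI) (auto simp: subspace_orthogonal_comp)
  ultimately show ?thesis
    by simp
qed

lemma span_of_image_residual: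
  assumes "V \<subseteq> span R"
    and residual: "\<And>u. u - f u \<in> V"
    and "f v \<in> span (f ` R)"
  shows "v \<in> span R"
proof -
  have "f r \<in> span R" if "r \<in> R" for r
    using span_diff[OF span_base[OF that], of "r - f r"] residual assms(1) by auto
  then have "f ` R \<subseteq> span R"
    by blast
  then have "span (f ` R) \<subseteq> span R"
    by (rule span_minimal) simp
  then show ?thesis
    using span_add[of "f v" R "v - f v"] residual assms by auto
qed

lemma rvec_commute: "rvec p y x = rvec p x y"
  unfolding vec_eq_iff by (simp add: rvec_def)

lemma rvecs_mono: "E \<subseteq> F \<Longrightarrow> rvecs p E \<subseteq> rvecs p F"
  unfolding rvecs_def by blast

lemma rvec_doubleton_cong:
  assumes "{x, y} = {x', y'}"
  shows "rvec p x y = rvec p x' y'"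
proof -
  consider "x = x'" "y = y'" | "x = y'" "y = x'"
    using assms unfolding doubleton_eq_iff by blast
  then show ?thesis
    using rvec_commute[of p x y] by cases simp_all
qed

lemma rvecs_rigidity_closure: "rvecs p (rigidity_closure p G) \<subseteq> span (rvecs p G)"
proof
  fix r assume "r \<in> rvecs p (rigidity_closure p G)"
  then obtain x y where r: "r = rvec p x y" "{x, y} \<in> rigidity_closure p G"
    unfolding rvecs_def by blast
  then obtain x' y' where "{x, y} = {x', y'}" "rvec p x' y' \<in> span (rvecs p G)"
    unfolding rigidity_closure_def by blast
  with r show "r \<in> span (rvecs p G)"
    using rvec_doubleton_cong[of x y x' y' p] by simp
qed

lemma V_sub_subset_span:
  assumes "edges_of A \<subseteq> rigidity_closure p G"
  shows "V_sub p A \<subseteq> span (rvecs p G)"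
  unfolding V_sub_def
  using rvecs_mono[OF assms, of p] rvecs_rigidity_closure[of p G]
  by (intro span_minimal) auto

theorem claim2p5:
  fixes p :: "'v::finite \<Rightarrow> real^'d"
    and G :: "'v set set"
    and A :: "'v set"
  assumes "generic p"
    and "G \<subseteq> edges_of UNIV"
    and "edges_of A \<subseteq> rigidity_closure p G"
  shows "rel_rigidity_closure p A G \<subseteq> rigidity_closure p G"
proof
  fix e assume "e \<in> rel_rigidity_closure p A G"
  then obtain x y where e: "e = {x, y}" "x \<noteq> y"
    and proj: "orth_proj (W_sub p A) (rvec p x y) \<in> span (orth_proj (W_sub p A) ` rvecs p G)"
    unfolding rel_rigidity_closure_def by blast
  have "u - orth_proj (W_sub p A) u \<in> V_sub p A" for u
    unfolding W_sub_def by (rule diff_orth_proj_orthogonal_comp) (simp add: V_sub_def)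
  then have "rvec p x y \<in> span (rvecs p G)"
    using span_of_image_residual[OF V_sub_subset_span[OF assms(3)] _ proj] by blast
  then show "e \<in> rigidity_closure p G"
    unfolding rigidity_closure_def using e by blast
qed

end
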